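(* Let $r,t$ be integers with $1 \leq t\leq r-2$. Then there exist an $r$-regular graph $G$ that has a $t$-factor and a set $\mathcal{O}$ of pairwise edge-disjoint odd cycles of $G$ such that every $t$-factor of $G$ is edge-disjoint from at least one cycle of $\mathcal{O}$.
   Context: All graphs are finite and loopless but may have parallel edges. A cycle is a connected $2$-regular subgraph; it is odd if it has an odd number of edges. A $t$-factor of $G$ is a spanning $t$-regular subgraph. *)

theory Defs
  imports Main
begin

text \<open>A finite loopless multigraph: vertex set V, edge set E, and an endpoint map
  giving each edge a set of exactly two distinct vertices (parallel edges allowed,
  since distinct edges may have the same endpoints).\<close>

definition multigraph :: "'v set \<Rightarrow> 'e set \<Rightarrow> ('e \<Rightarrow> 'v set) \<Rightarrow> bool" where
  "multigraph V E ends \<longleftrightarrow> finite V \<and> finite E \<and>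
     (\<forall>e\<in>E. ends e \<subseteq> V \<and> card (ends e) = 2)"

definition degree_in :: "'e set \<Rightarrow> ('e \<Rightarrow> 'v set) \<Rightarrow> 'v \<Rightarrow> nat" where
  "degree_in F ends v = card {e\<in>F. v \<in> ends e}"

definition regular :: "'v set \<Rightarrow> 'e set \<Rightarrow> ('e \<Rightarrow> 'v set) \<Rightarrow> nat \<Rightarrow> bool" where
  "regular V E ends r \<longleftrightarrow> (\<forall>v\<in>V. degree_in E ends v = r)"

definition t_factor :: "'v set \<Rightarrow> 'e set \<Rightarrow> ('e \<Rightarrow> 'v set) \<Rightarrow> nat \<Rightarrow> 'e set \<Rightarrow> bool" where
  "t_factor V E ends t F \<longleftrightarrow> F \<subseteq> E \<and> regular V F ends t"

definition verts_of :: "('e \<Rightarrow> 'v set) \<Rightarrow> 'e set \<Rightarrow> 'v set" where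
  "verts_of ends C = (\<Union>e\<in>C. ends e)"

definition connected_edges :: "('e \<Rightarrow> 'v set) \<Rightarrow> 'e set \<Rightarrow> bool" where
  "connected_edges ends C \<longleftrightarrow>
     (\<forall>u\<in>verts_of ends C. \<forall>v\<in>verts_of ends C.
        (u, v) \<in> {(x, y). \<exists>e\<in>C. ends e = {x, y}}\<^sup>*)"

definition is_cycle :: "'e set \<Rightarrow> ('e \<Rightarrow> 'v set) \<Rightarrow> 'e set \<Rightarrow> bool" where
  "is_cycle E ends C \<longleftrightarrow> C \<noteq> {} \<and> C \<subseteq> E \<and>
     regular (verts_of ends C) C ends 2 \<and> connected_edges ends C"

definition odd_cycle :: "'e set \<Rightarrow> ('e \<Rightarrow> 'v set) \<Rightarrow> 'e set \<Rightarrow> bool" where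
  "odd_cycle E ends C \<longleftrightarrow> is_cycle E ends C \<and> odd (card C)"

end

theory Submission
  imports Defs
begin

text \<open>Take two hubs joined by \<open>l\<close> parallel edges and give each hub \<open>m\<close> rungs: pairs of adjacent
  spokes, both joined to the hub, each spoke carrying a pendant gadget that brings all degrees up to
  \<open>r = 2m + l\<close>. A spoke with its gadget is cut off from the rest of the graph by just two edges,
  its hub edge and its rung, and has degree sum \<open>4t\<close> in a \<open>t\<close>-factor; by parity a \<open>t\<close>-factor
  contains both of these edges or neither. Since \<open>t < r - l = 2m\<close>, a \<open>t\<close>-factor misses some hub
  edge at the first hub, hence the whole triangle formed by the hub and that rung; these triangles are
  edge-disjoint. A \<open>t\<close>-factor exists: with \<open>t = 2k + j\<close>, take \<open>j\<close> hub edges, the first \<open>k\<close> rungs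
  at each hub with their hub edges, and complete the degrees inside the gadgets.\<close>

section \<open>Parity of cuts and triangles\<close>

lemma sum_degree_in_eq:
  assumes "finite F" "finite X"
  shows "(\<Sum>x\<in>X. degree_in F ends x) = (\<Sum>e\<in>F. card (ends e \<inter> X))"
proof -
  have "(\<Sum>x\<in>X. degree_in F ends x) = (\<Sum>x\<in>X. \<Sum>e\<in>F. if x \<in> ends e then 1 else 0)"
    using assms by (simp add: degree_in_def sum.If_cases Collect_conj_eq Int_commute)
  also have "\<dots> = (\<Sum>e\<in>F. \<Sum>x\<in>X. if x \<in> ends e then 1 else 0)"
    by (rule sum.swap)
  also have "\<dots> = (\<Sum>e\<in>F. card (ends e \<inter> X))"
    using assms by (simp add: sum.If_cases Int_commute)
  finally show ?thesis .
qed

lemma even_card_cut_edges: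
  assumes "finite F" "finite X" and two: "\<And>e. e \<in> F \<Longrightarrow> card (ends e) = 2"
    and even_deg: "even (\<Sum>x\<in>X. degree_in F ends x)"
  shows "even (card {e\<in>F. card (ends e \<inter> X) = 1})"
proof -
  have "card (ends e \<inter> X) = of_bool (card (ends e \<inter> X) = 1) + 2 * of_bool (card (ends e \<inter> X) = 2)"
    if "e \<in> F" for e
  proof -
    have "card (ends e \<inter> X) \<le> 2"
      using two[OF that] card_mono[of "ends e" "ends e \<inter> X"] by (metis card.infinite inf_le1 zero_neq_numeral)
    then show ?thesis
      by (auto simp: le_Suc_eq numeral_2_eq_2)
  qed
  then have "(\<Sum>x\<in>X. degree_in F ends x) =
      (\<Sum>e\<in>F. of_bool (card (ends e \<inter> X) = 1) + 2 * of_bool (card (ends e \<inter> X) = 2))"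
    unfolding sum_degree_in_eq[OF assms(1,2)] by (rule sum.cong[OF refl])
  also have "\<dots> = card {e\<in>F. card (ends e \<inter> X) = 1} + 2 * card {e\<in>F. card (ends e \<inter> X) = 2}"
    using assms(1) by (simp only: sum.distrib sum_distrib_left[symmetric] sum_of_bool_eq of_nat_id Int_def)
      (simp add: Collect_conj_eq)
  finally show ?thesis
    using even_deg by simp
qed

lemma odd_cycle_triangle:
  assumes "a \<noteq> b" "b \<noteq> c" "a \<noteq> c" "{e1, e2, e3} \<subseteq> E"
    and ends: "ends e1 = {a, b}" "ends e2 = {b, c}" "ends e3 = {a, c}"
  shows "odd_cycle E ends {e1, e2, e3}"
proof -
  let ?R = "{(x, y). \<exists>e\<in>{e1, e2, e3}. ends e = {x, y}}"
  have distinct: "e1 \<noteq> e2" "e2 \<noteq> e3" "e1 \<noteq> e3"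
    using assms by (auto simp: doubleton_eq_iff)
  have verts: "verts_of ends {e1, e2, e3} = {a, b, c}"
    using ends by (auto simp: verts_of_def)
  have "{e \<in> {e1, e2, e3}. a \<in> ends e} = {e1, e3}" "{e \<in> {e1, e2, e3}. b \<in> ends e} = {e1, e2}"
    "{e \<in> {e1, e2, e3}. c \<in> ends e} = {e2, e3}"
    using assms by auto
  then have "regular {a, b, c} {e1, e2, e3} ends 2"
    using distinct by (simp add: regular_def degree_in_def)
  moreover have "(u, v) \<in> ?R\<^sup>*" if "u \<in> {a, b, c}" "v \<in> {a, b, c}" for u v
  proof -
    have "?R = {(a, b), (b, a), (b, c), (c, b), (a, c), (c, a)}"
      using ends by (auto simp: doubleton_eq_iff)
    then show ?thesis
      using that by (cases "u = v") auto
  qed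
  moreover have "card {e1, e2, e3} = 3"
    using distinct by simp
  ultimately show ?thesis
    using assms(4) verts by (simp add: odd_cycle_def is_cycle_def connected_edges_def)
qed

section \<open>Multigraphs with prescribed edge multiplicities\<close>

definition mult_edges :: "'v set \<Rightarrow> ('v \<Rightarrow> 'v \<Rightarrow> nat) \<Rightarrow> ('v set \<times> nat) set" where
  "mult_edges V g = {({a, b}, n) | a b n. a \<in> V \<and> b \<in> V \<and> a \<noteq> b \<and> n < g a b}"

lemma finite_mult_edges:
  assumes "finite V"
  shows "finite (mult_edges V g)"
proof -
  have "mult_edges V g \<subseteq> (\<lambda>(a, b, n). ({a, b}, n)) ` (SIGMA a:V. SIGMA b:V. {..<g a b})"
    by (force simp: mult_edges_def)
  then show ?thesis
    using assms by (meson finite_SigmaI finite_imageI finite_lessThan finite_subset)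
qed

lemma multigraph_mult_edges: "finite V \<Longrightarrow> multigraph V (mult_edges V g) fst"
  unfolding multigraph_def by (auto simp: finite_mult_edges) (auto simp: mult_edges_def)

lemma mult_edges_mono: "(\<And>a b. g a b \<le> h a b) \<Longrightarrow> mult_edges V g \<subseteq> mult_edges V h"
  by (force simp: mult_edges_def intro: less_le_trans)

lemma degree_in_mult_edges:
  assumes "finite V" "x \<in> V" and sym: "\<And>a b. g a b = g b a" and "g x x = 0"
  shows "degree_in (mult_edges V g) fst x = (\<Sum>y\<in>V. g x y)"
proof -
  have "{e \<in> mult_edges V g. x \<in> fst e} = (\<Union>y\<in>V - {x}. (\<lambda>n. ({x, y}, n)) ` {..<g x y})"
  proof (intro set_eqI iffI)
    fix e
    assume "e \<in> {e \<in> mult_edges V g. x \<in> fst e}"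
    then obtain y n where "e = ({x, y}, n)" "y \<in> V - {x}" "n < g x y"
      by (auto simp: mult_edges_def insert_commute sym) blast+
    then show "e \<in> (\<Union>y\<in>V - {x}. (\<lambda>n. ({x, y}, n)) ` {..<g x y})"
      by blast
  qed (use \<open>x \<in> V\<close> in \<open>auto simp: mult_edges_def\<close>)
  moreover have "card (\<Union>y\<in>V - {x}. (\<lambda>n. ({x, y}, n)) ` {..<g x y}) = (\<Sum>y\<in>V - {x}. g x y)"
    using \<open>finite V\<close> by (subst card_UN_disjoint) (auto simp: doubleton_eq_iff card_image inj_on_def)
  moreover have "(\<Sum>y\<in>V - {x}. g x y) = (\<Sum>y\<in>V. g x y)"
    using assms by (simp add: sum.remove)
  ultimately show ?thesis
    by (simp add: degree_in_def)
qed

lemma mult_edges_cut: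
  assumes sym: "\<And>a b. g a b = g b a"
  shows "{e \<in> mult_edges V g. card (fst e \<inter> X) = 1} =
    {({x, y}, n) | x y n. x \<in> V \<inter> X \<and> y \<in> V - X \<and> n < g x y}"
proof -
  have "card ({a, b} \<inter> X) = 1 \<longleftrightarrow> (a \<in> X) \<noteq> (b \<in> X)" if "a \<noteq> b" for a b :: 'a
    using that by (cases "a \<in> X"; cases "b \<in> X") auto
  then show ?thesis
    by (auto simp: mult_edges_def) (metis insert_commute sym)+
qed

section \<open>Relabelling vertices and edges\<close>

definition odd_cycle_obstruction ::
    "'v set \<Rightarrow> 'e set \<Rightarrow> ('e \<Rightarrow> 'v set) \<Rightarrow> nat \<Rightarrow> nat \<Rightarrow> 'e set set \<Rightarrow> bool" where
  "odd_cycle_obstruction V E ends r t \<O> \<longleftrightarrow>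
     multigraph V E ends \<and> regular V E ends r \<and>
     (\<exists>F. t_factor V E ends t F) \<and>
     (\<forall>C\<in>\<O>. odd_cycle E ends C) \<and>
     (\<forall>C\<in>\<O>. \<forall>D\<in>\<O>. C \<noteq> D \<longrightarrow> C \<inter> D = {}) \<and>
     (\<forall>F. t_factor V E ends t F \<longrightarrow> (\<exists>C\<in>\<O>. F \<inter> C = {}))"

locale multigraph_embedding =
  fixes V :: "'v set" and E :: "'e set" and ends :: "'e \<Rightarrow> 'v set"
    and fv :: "'v \<Rightarrow> 'w" and fe :: "'e \<Rightarrow> 'f" and ends' :: "'f \<Rightarrow> 'w set"
  assumes inj_fv: "inj_on fv V" and inj_fe: "inj_on fe E"
    and ends_subset: "e \<in> E \<Longrightarrow> ends e \<subseteq> V"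
    and ends'_image: "e \<in> E \<Longrightarrow> ends' (fe e) = fv ` ends e"
begin

lemma degree_in_image:
  assumes "F \<subseteq> E" "v \<in> V"
  shows "degree_in (fe ` F) ends' (fv v) = degree_in F ends v"
proof -
  have "v \<in> ends e \<longleftrightarrow> fv v \<in> fv ` ends e" if "e \<in> F" for e
    using that assms inj_on_image_mem_iff[OF inj_fv] ends_subset by blast
  then have "{e' \<in> fe ` F. fv v \<in> ends' e'} = fe ` {e \<in> F. v \<in> ends e}"
    using assms(1) ends'_image by auto
  moreover have "inj_on fe {e \<in> F. v \<in> ends e}"
    using inj_fe by (rule inj_on_subset) (use assms(1) in blast)
  ultimately show ?thesis
    by (simp add: degree_in_def card_image)
qed

lemma regular_image:
  assumes "F \<subseteq> E" "X \<subseteq> V"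
  shows "regular (fv ` X) (fe ` F) ends' d \<longleftrightarrow> regular X F ends d"
proof -
  have "\<forall>v\<in>X. degree_in (fe ` F) ends' (fv v) = degree_in F ends v"
    using assms degree_in_image by blast
  then show ?thesis
    by (simp add: regular_def)
qed

lemma t_factor_image:
  assumes "F \<subseteq> E"
  shows "t_factor (fv ` V) (fe ` E) ends' t (fe ` F) \<longleftrightarrow> t_factor V E ends t F"
  using assms regular_image[of F V] by (auto simp: t_factor_def)

lemma verts_of_image: "C \<subseteq> E \<Longrightarrow> verts_of ends' (fe ` C) = fv ` verts_of ends C"
  by (auto simp: verts_of_def ends'_image subset_iff)

lemma connected_edges_image:
  assumes "C \<subseteq> E" "connected_edges ends C"
  shows "connected_edges ends' (fe ` C)"
  unfolding connected_edges_def verts_of_image[OF assms(1)]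
proof (intro ballI)
  fix u v
  assume "u \<in> fv ` verts_of ends C" "v \<in> fv ` verts_of ends C"
  then obtain x y where "x \<in> verts_of ends C" "y \<in> verts_of ends C" "u = fv x" "v = fv y"
    by blast
  then have "(x, y) \<in> {(x, y). \<exists>e\<in>C. ends e = {x, y}}\<^sup>*"
    using assms(2) by (auto simp: connected_edges_def)
  then show "(u, v) \<in> {(x, y). \<exists>e\<in>fe ` C. ends' e = {x, y}}\<^sup>*"
    unfolding \<open>u = fv x\<close> \<open>v = fv y\<close>
  proof (induction rule: rtrancl_induct)
    case (step y z)
    then obtain e where "e \<in> C" "ends e = {y, z}"
      by blast
    then have "(fv y, fv z) \<in> {(x, y). \<exists>e\<in>fe ` C. ends' e = {x, y}}"
      using assms(1) ends'_image by fastforce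
    with step.IH show ?case
      by (rule rtrancl_into_rtrancl)
  qed simp
qed

lemma odd_cycle_image:
  assumes "odd_cycle E ends C"
  shows "odd_cycle (fe ` E) ends' (fe ` C)"
proof -
  have "C \<subseteq> E"
    using assms by (simp add: odd_cycle_def is_cycle_def)
  moreover have "verts_of ends C \<subseteq> V"
    using \<open>C \<subseteq> E\<close> ends_subset by (auto simp: verts_of_def)
  moreover have "card (fe ` C) = card C"
    using \<open>C \<subseteq> E\<close> inj_fe by (metis card_image inj_on_subset)
  ultimately show ?thesis
    using assms connected_edges_image[of C] regular_image[of C "verts_of ends C"] verts_of_image[of C]
    by (auto simp: odd_cycle_def is_cycle_def)
qed

lemma multigraph_image:
  assumes "multigraph V E ends"
  shows "multigraph (fv ` V) (fe ` E) ends'"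
proof -
  have "ends' (fe e) \<subseteq> fv ` V" "card (ends' (fe e)) = card (ends e)" if "e \<in> E" for e
    using that ends'_image ends_subset[OF that] inj_on_subset[OF inj_fv ends_subset[OF that]]
    by (auto simp: card_image)
  then show ?thesis
    using assms by (auto simp: multigraph_def)
qed

lemma odd_cycle_obstruction_image:
  assumes "odd_cycle_obstruction V E ends r t \<O>"
  shows "odd_cycle_obstruction (fv ` V) (fe ` E) ends' r t ((`) fe ` \<O>)"
proof -
  have cycles: "\<And>C. C \<in> \<O> \<Longrightarrow> odd_cycle E ends C"
    and disjoint: "\<And>C D. C \<in> \<O> \<Longrightarrow> D \<in> \<O> \<Longrightarrow> C \<noteq> D \<Longrightarrow> C \<inter> D = {}"
    and avoided: "\<And>F. t_factor V E ends t F \<Longrightarrow> \<exists>C\<in>\<O>. F \<inter> C = {}"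
    using assms by (auto simp: odd_cycle_obstruction_def)
  then have cycles_in_E: "\<And>C. C \<in> \<O> \<Longrightarrow> C \<subseteq> E"
    by (simp add: odd_cycle_def is_cycle_def)
  have image_Int: "fe ` C \<inter> fe ` D = fe ` (C \<inter> D)" if "C \<subseteq> E" "D \<subseteq> E" for C D
    by (rule inj_on_image_Int[OF inj_fe that, symmetric])
  have "\<exists>C\<in>(`) fe ` \<O>. F' \<inter> C = {}" if "t_factor (fv ` V) (fe ` E) ends' t F'" for F'
  proof -
    let ?F = "E \<inter> fe -` F'"
    have "F' = fe ` ?F"
      using that by (auto simp: t_factor_def)
    with that have "t_factor V E ends t ?F"
      using t_factor_image[of ?F] by auto
    then obtain C where "C \<in> \<O>" "?F \<inter> C = {}"
      using avoided by blast
    then show ?thesis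
      using \<open>F' = fe ` ?F\<close> image_Int[of ?F C] cycles_in_E by (metis Int_lower1 image_empty imageI)
  qed
  moreover have "fe ` C \<inter> fe ` D = {}" if "C \<in> \<O>" "D \<in> \<O>" "fe ` C \<noteq> fe ` D" for C D
    using that disjoint image_Int cycles_in_E by (metis image_empty)
  moreover have "\<exists>F'. t_factor (fv ` V) (fe ` E) ends' t F'"
  proof -
    obtain F where "t_factor V E ends t F"
      using assms by (auto simp: odd_cycle_obstruction_def)
    then show ?thesis
      using t_factor_image[of F] by (auto simp: t_factor_def)
  qed
  ultimately show ?thesis
    using assms multigraph_image odd_cycle_image cycles regular_image[of E V]
    by (auto simp: odd_cycle_obstruction_def)
qed

end

lemma odd_cycle_obstruction_nat:
  fixes V :: "'v set" and E :: "'e set"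
  assumes "odd_cycle_obstruction V E ends r t \<O>"
  shows "\<exists>(V' :: nat set) (E' :: nat set) ends' \<O>'. odd_cycle_obstruction V' E' ends' r t \<O>'"
proof -
  have "finite V" "finite E" "\<And>e. e \<in> E \<Longrightarrow> ends e \<subseteq> V"
    using assms by (auto simp: odd_cycle_obstruction_def multigraph_def)
  moreover obtain fv :: "'v \<Rightarrow> nat" where "inj_on fv V"
    using finite_imp_inj_to_nat_seg[OF \<open>finite V\<close>] by blast
  moreover obtain fe :: "'e \<Rightarrow> nat" where "inj_on fe E"
    using finite_imp_inj_to_nat_seg[OF \<open>finite E\<close>] by blast
  ultimately interpret multigraph_embedding V E ends fv fe "\<lambda>e'. fv ` ends (the_inv_into E fe e')"
    by unfold_locales (simp_all add: the_inv_into_f_f)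
  show ?thesis
    using odd_cycle_obstruction_image[OF assms] by blast
qed

text \<open>\<open>Spoke h i s\<close> is spoke \<open>s\<close> of rung \<open>i\<close> at hub \<open>h\<close>.\<close>

datatype vertex = Hub bool | Spoke bool nat bool | Gadget bool nat bool nat

locale obstruction_graph =
  fixes r t m l k j :: nat
  assumes r_eq: "2 * m + l = r" and l_less: "l < r - t" and t_le: "t + 2 \<le> r"
    and t_eq: "2 * k + j = t" and k_le: "k \<le> m" and j_le: "j \<le> l"
begin

text \<open>Each adjacent pair is listed in one orientation only; \<open>mult\<close> symmetrises.\<close>

fun arc_mult :: "vertex \<Rightarrow> vertex \<Rightarrow> nat" where
  "arc_mult (Hub a) (Hub b) = (if \<not> a \<and> b then l else 0)"
| "arc_mult (Hub a) (Spoke h i s) = (if a = h \<and> i < m then 1 else 0)"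
| "arc_mult (Spoke h i s) (Spoke h' i' s') = (if h = h' \<and> i = i' \<and> i < m \<and> \<not> s \<and> s' then 1 else 0)"
| "arc_mult (Spoke h i s) (Gadget h' i' s' q) =
    (if h = h' \<and> i = i' \<and> s = s' \<and> i < m \<and> q = 0 then r - 2 else 0)"
| "arc_mult (Gadget h i s q) (Gadget h' i' s' q') =
    (if h = h' \<and> i = i' \<and> s = s' \<and> i < m then
       (if q = 0 \<and> (q' = 1 \<or> q' = 2) then 1 else if q = 1 \<and> q' = 2 then r - 1 else 0)
     else 0)"
| "arc_mult _ _ = 0"

fun factor_arc_mult :: "vertex \<Rightarrow> vertex \<Rightarrow> nat" where
  "factor_arc_mult (Hub a) (Hub b) = (if \<not> a \<and> b then j else 0)"
| "factor_arc_mult (Hub a) (Spoke h i s) = (if a = h \<and> i < k then 1 else 0)"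
| "factor_arc_mult (Spoke h i s) (Spoke h' i' s') = (if h = h' \<and> i = i' \<and> i < k \<and> \<not> s \<and> s' then 1 else 0)"
| "factor_arc_mult (Spoke h i s) (Gadget h' i' s' q) =
    (if h = h' \<and> i = i' \<and> s = s' \<and> i < m \<and> q = 0 then if i < k then t - 2 else t else 0)"
| "factor_arc_mult (Gadget h i s q) (Gadget h' i' s' q') =
    (if h = h' \<and> i = i' \<and> s = s' \<and> i < m then
       (if i < k \<and> q = 0 \<and> (q' = 1 \<or> q' = 2) then 1
        else if q = 1 \<and> q' = 2 then if i < k then t - 1 else t else 0)
     else 0)"
| "factor_arc_mult _ _ = 0"

definition mult :: "vertex \<Rightarrow> vertex \<Rightarrow> nat" where
  "mult x y = arc_mult x y + arc_mult y x"

definition factor_mult :: "vertex \<Rightarrow> vertex \<Rightarrow> nat" where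
  "factor_mult x y = factor_arc_mult x y + factor_arc_mult y x"

definition V :: "vertex set" where
  "V = range Hub \<union> {Spoke h i s | h i s. i < m} \<union> {Gadget h i s q | h i s q. i < m \<and> q < 3}"

definition E :: "(vertex set \<times> nat) set" where
  "E = mult_edges V mult"

lemma mult_sym: "mult x y = mult y x"
  by (simp add: mult_def)

lemma factor_mult_sym: "factor_mult x y = factor_mult y x"
  by (simp add: factor_mult_def)

lemma mult_diag: "mult x x = 0"
  by (cases x) (auto simp: mult_def)

lemma factor_mult_diag: "factor_mult x x = 0"
  by (cases x) (auto simp: factor_mult_def)

lemma factor_mult_le_mult: "factor_mult x y \<le> mult x y"
proof -
  have "factor_arc_mult x y \<le> arc_mult x y" for x y
    using k_le t_le j_le by (cases x; cases y) auto
  then show ?thesis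
    by (simp add: factor_mult_def mult_def add_mono)
qed

lemma finite_V: "finite V"
proof -
  have "{Spoke h i s | h i s. i < m} = (\<lambda>(h, i, s). Spoke h i s) ` (UNIV \<times> {..<m} \<times> UNIV)"
    "{Gadget h i s q | h i s q. i < m \<and> q < 3} =
       (\<lambda>(h, i, s, q). Gadget h i s q) ` (UNIV \<times> {..<m} \<times> UNIV \<times> {..<3})"
    by (auto simp: image_iff)
  then show ?thesis
    by (simp add: V_def)
qed

definition spokes :: "bool \<Rightarrow> vertex set" where
  "spokes h = {Spoke h i s | i s. i < m}"

fun nbrs :: "vertex \<Rightarrow> vertex set" where
  "nbrs (Hub h) = insert (Hub (\<not> h)) (spokes h)"
| "nbrs (Spoke h i s) = {Hub h, Spoke h i (\<not> s), Gadget h i s 0}"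
| "nbrs (Gadget h i s q) =
    (if q = 0 then {Spoke h i s, Gadget h i s 1, Gadget h i s 2}
     else if q = 1 then {Gadget h i s 0, Gadget h i s 2}
     else if q = 2 then {Gadget h i s 0, Gadget h i s 1} else {})"

lemma mem_nbrs: "mult x y \<noteq> 0 \<Longrightarrow> y \<in> nbrs x"
  by (cases x; cases y) (auto simp: mult_def spokes_def split: if_splits)

lemma nbrs_subset: "x \<in> V \<Longrightarrow> nbrs x \<subseteq> V"
  by (cases x) (auto simp: V_def spokes_def)

lemma sum_V_eq_sum_nbrs:
  assumes "x \<in> V" and "\<And>y. mult x y = 0 \<Longrightarrow> g y = 0"
  shows "(\<Sum>y\<in>V. g y) = (\<Sum>y\<in>nbrs x. g y)"
  using assms mem_nbrs by (intro sum.mono_neutral_right[OF finite_V nbrs_subset]) auto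

lemma sum_nbrs_hub:
  "(\<Sum>y\<in>nbrs (Hub h). g y) = g (Hub (\<not> h)) + (\<Sum>i<m. g (Spoke h i False) + g (Spoke h i True))"
proof -
  have spokes: "spokes h = (\<lambda>(i, s). Spoke h i s) ` ({..<m} \<times> UNIV)"
    by (auto simp: spokes_def image_iff)
  have "(\<Sum>y\<in>spokes h. g y) = (\<Sum>(i, s)\<in>{..<m} \<times> UNIV. g (Spoke h i s))"
    unfolding spokes by (subst sum.reindex) (auto simp: inj_on_def case_prod_beta)
  also have "\<dots> = (\<Sum>i<m. g (Spoke h i False) + g (Spoke h i True))"
    by (simp add: sum.cartesian_product[symmetric] UNIV_bool)
  finally have "(\<Sum>y\<in>spokes h. g y) = (\<Sum>i<m. g (Spoke h i False) + g (Spoke h i True))" .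
  moreover have "finite (spokes h)" "Hub (\<not> h) \<notin> spokes h"
    by (auto simp: spokes)
  ultimately show ?thesis
    by simp
qed

lemma sum_mult:
  assumes "x \<in> V"
  shows "(\<Sum>y\<in>V. mult x y) = r"
proof -
  have "(\<Sum>y\<in>V. mult x y) = (\<Sum>y\<in>nbrs x. mult x y)"
    by (rule sum_V_eq_sum_nbrs[OF assms])
  also have "\<dots> = r"
    using assms r_eq t_le
    by (cases x) (auto simp: sum_nbrs_hub mult_def V_def numeral_3_eq_3 less_Suc_eq simp del: nbrs.simps(1))
  finally show ?thesis .
qed

lemma sum_factor_mult:
  assumes "x \<in> V"
  shows "(\<Sum>y\<in>V. factor_mult x y) = t"
proof -
  have "(\<Sum>y\<in>V. factor_mult x y) = (\<Sum>y\<in>nbrs x. factor_mult x y)"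
    using factor_mult_le_mult by (intro sum_V_eq_sum_nbrs[OF assms]) (metis le_zero_eq)
  moreover have "(\<Sum>i<m. factor_mult (Hub h) (Spoke h i False) + factor_mult (Hub h) (Spoke h i True)) = 2 * k"
    for h
  proof -
    have "(\<Sum>i<m. factor_mult (Hub h) (Spoke h i False) + factor_mult (Hub h) (Spoke h i True)) =
        (\<Sum>i<m. if i < k then 2 else 0)"
      by (rule sum.cong) (auto simp: factor_mult_def)
    also have "\<dots> = 2 * k"
    proof -
      have "{..<m} \<inter> {i. i < k} = {..<k}"
        using k_le by auto
      then show ?thesis
        by (simp add: sum.If_cases)
    qed
    finally show ?thesis .
  qed
  ultimately show ?thesis
    using assms t_eq t_le
    by (cases x) (auto simp: sum_nbrs_hub factor_mult_def V_def numeral_3_eq_3 less_Suc_eq simp del: nbrs.simps(1))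
qed

lemma multigraph_E: "multigraph V E fst"
  by (simp add: E_def multigraph_mult_edges finite_V)

lemma finite_E: "finite E"
  by (simp add: E_def finite_mult_edges finite_V)

lemma regular_E: "regular V E fst r"
  by (simp add: regular_def E_def degree_in_mult_edges finite_V mult_sym mult_diag sum_mult)

lemma t_factor_exists: "t_factor V E fst t (mult_edges V factor_mult)"
  by (simp add: t_factor_def regular_def E_def mult_edges_mono factor_mult_le_mult
      degree_in_mult_edges finite_V factor_mult_sym factor_mult_diag sum_factor_mult)

definition spoke_block :: "bool \<Rightarrow> nat \<Rightarrow> bool \<Rightarrow> vertex set" where
  "spoke_block h i s = {Spoke h i s, Gadget h i s 0, Gadget h i s 1, Gadget h i s 2}"

lemma spoke_block_cut:
  assumes "i < m"
  shows "{e \<in> E. card (fst e \<inter> spoke_block h i s) = 1} =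
    {({Hub h, Spoke h i s}, 0), ({Spoke h i False, Spoke h i True}, 0)}"
proof -
  let ?X = "spoke_block h i s"
  have mult_one: "mult (Spoke h i s) (Hub h) = 1" "mult (Spoke h i s) (Spoke h i (\<not> s)) = 1"
    using assms by (cases s; simp add: mult_def)+
  have in_V: "Spoke h i s \<in> V" "Hub h \<in> V" "Spoke h i (\<not> s) \<in> V"
    using assms by (auto simp: V_def)
  have rung: "{Spoke h i s, Spoke h i (\<not> s)} = {Spoke h i False, Spoke h i True}"
    by (cases s) auto
  have "{({x, y}, n) | x y n. x \<in> V \<inter> ?X \<and> y \<in> V - ?X \<and> n < mult x y} =
      {({Spoke h i s, Hub h}, 0::nat), ({Spoke h i s, Spoke h i (\<not> s)}, 0)}"
  proof (intro set_eqI iffI)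
    fix e
    assume "e \<in> {({x, y}, n) | x y n. x \<in> V \<inter> ?X \<and> y \<in> V - ?X \<and> n < mult x y}"
    then obtain x y n where e: "e = ({x, y}, n)" "x \<in> ?X" "y \<notin> ?X" "n < mult x y"
      by blast
    then have "x = Spoke h i s \<and> (y = Hub h \<or> y = Spoke h i (\<not> s))"
      using mem_nbrs[of x y] by (auto simp: spoke_block_def split: if_splits)
    then show "e \<in> {({Spoke h i s, Hub h}, 0), ({Spoke h i s, Spoke h i (\<not> s)}, 0)}"
      using e mult_one by auto
  next
    have "({Spoke h i s, y}, 0) \<in> {({x, y}, n) | x y n. x \<in> V \<inter> ?X \<and> y \<in> V - ?X \<and> n < mult x y}"
      if "y \<in> V - ?X" "mult (Spoke h i s) y = 1" for y
      using that in_V by (intro CollectI exI[of _ "Spoke h i s"] exI[of _ y] exI[of _ 0])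
        (simp add: spoke_block_def)
    moreover have "Hub h \<notin> ?X" "Spoke h i (\<not> s) \<notin> ?X"
      by (auto simp: spoke_block_def)
    ultimately show "e \<in> {({x, y}, n) | x y n. x \<in> V \<inter> ?X \<and> y \<in> V - ?X \<and> n < mult x y}"
      if "e \<in> {({Spoke h i s, Hub h}, 0::nat), ({Spoke h i s, Spoke h i (\<not> s)}, 0)}" for e
      using that in_V mult_one by blast
  qed
  then show ?thesis
    unfolding E_def mult_edges_cut[OF mult_sym] rung by (simp add: insert_commute)
qed

lemma t_factor_hub_edge_iff_rung:
  assumes F: "t_factor V E fst t F" and "i < m"
  shows "({Hub h, Spoke h i s}, 0) \<in> F \<longleftrightarrow> ({Spoke h i False, Spoke h i True}, 0) \<in> F"
proof -
  let ?X = "spoke_block h i s"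
  have "F \<subseteq> E" "\<And>v. v \<in> V \<Longrightarrow> degree_in F fst v = t"
    using F by (auto simp: t_factor_def regular_def)
  moreover have "?X \<subseteq> V"
    using \<open>i < m\<close> by (auto simp: spoke_block_def V_def)
  ultimately have "(\<Sum>x\<in>?X. degree_in F fst x) = 4 * t"
    by (simp add: spoke_block_def)
  moreover have "card (fst e) = 2" if "e \<in> F" for e
    using \<open>F \<subseteq> E\<close> that multigraph_E by (auto simp: multigraph_def)
  ultimately have "even (card {e \<in> F. card (fst e \<inter> ?X) = 1})"
    using \<open>F \<subseteq> E\<close> finite_E by (intro even_card_cut_edges) (auto simp: spoke_block_def finite_subset)
  moreover have "{e \<in> F. card (fst e \<inter> ?X) = 1} =
      F \<inter> {({Hub h, Spoke h i s}, 0), ({Spoke h i False, Spoke h i True}, 0)}"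
    using spoke_block_cut[OF \<open>i < m\<close>, of h s] \<open>F \<subseteq> E\<close> by blast
  moreover have "({Hub h, Spoke h i s}, 0::nat) \<noteq> ({Spoke h i False, Spoke h i True}, 0)"
    by (auto simp: doubleton_eq_iff)
  ultimately show ?thesis
    by (auto simp: Int_insert_right split: if_splits)
qed

definition triangle :: "nat \<Rightarrow> (vertex set \<times> nat) set" where
  "triangle i = {({Hub False, Spoke False i False}, 0), ({Spoke False i False, Spoke False i True}, 0),
     ({Hub False, Spoke False i True}, 0)}"

lemma odd_cycle_triangle_E:
  assumes "i < m"
  shows "odd_cycle E fst (triangle i)"
proof -
  have "triangle i \<subseteq> E"
    using spoke_block_cut[OF assms, of False False] spoke_block_cut[OF assms, of False True]
    by (auto simp: triangle_def)
  then show ?thesis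
    unfolding triangle_def by (intro odd_cycle_triangle) auto
qed

lemma triangles_disjoint: "i \<noteq> i' \<Longrightarrow> triangle i \<inter> triangle i' = {}"
  by (auto simp: triangle_def doubleton_eq_iff)

lemma t_factor_avoids_triangle:
  assumes F: "t_factor V E fst t F"
  shows "\<exists>i<m. F \<inter> triangle i = {}"
proof -
  have "\<exists>i s. i < m \<and> ({Hub False, Spoke False i s}, 0) \<notin> F"
  proof (rule ccontr)
    assume all_in_F: "\<not> ?thesis"
    let ?hub_spoke_edges = "(\<lambda>(i, s). ({Hub False, Spoke False i s}, 0::nat)) ` ({..<m} \<times> UNIV)"
    have "inj_on (\<lambda>(i, s). ({Hub False, Spoke False i s}, 0::nat)) ({..<m} \<times> UNIV)"
      by (auto simp: inj_on_def doubleton_eq_iff)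
    then have "2 * m = card ?hub_spoke_edges"
      by (simp add: card_image card_cartesian_product)
    also have "\<dots> \<le> degree_in F fst (Hub False)"
      unfolding degree_in_def using all_in_F F finite_E
      by (intro card_mono) (auto simp: t_factor_def finite_subset)
    finally have "2 * m \<le> degree_in F fst (Hub False)" .
    moreover have "degree_in F fst (Hub False) = t"
      using F by (auto simp: t_factor_def regular_def V_def)
    ultimately show False
      using r_eq l_less by linarith
  qed
  then obtain i s where "i < m" "({Hub False, Spoke False i s}, 0) \<notin> F"
    by blast
  with t_factor_hub_edge_iff_rung[OF F \<open>i < m\<close>] have "F \<inter> triangle i = {}"
    by (cases s) (auto simp: triangle_def)
  with \<open>i < m\<close> show ?thesis
    by blast
qed

lemma odd_cycle_obstruction_triangles: "odd_cycle_obstruction V E fst r t (triangle ` {..<m})"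
proof -
  have disjoint: "C \<inter> D = {}" if "C \<in> triangle ` {..<m}" "D \<in> triangle ` {..<m}" "C \<noteq> D" for C D
    using that triangles_disjoint by (metis imageE)
  have avoided: "\<exists>C\<in>triangle ` {..<m}. F \<inter> C = {}" if "t_factor V E fst t F" for F
    using t_factor_avoids_triangle[OF that] by blast
  show ?thesis
    unfolding odd_cycle_obstruction_def
    using multigraph_E regular_E t_factor_exists odd_cycle_triangle_E disjoint avoided
    by (intro conjI; blast)
qed

end

theorem theorem2p1:
  fixes r t :: nat
  assumes "1 \<le> t" and "t + 2 \<le> r"
  shows "\<exists>(V :: nat set) (E :: nat set) (ends :: nat \<Rightarrow> nat set) (\<O> :: nat set set).
           multigraph V E ends \<and> regular V E ends r \<and>
           (\<exists>F. t_factor V E ends t F) \<and>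
           (\<forall>C\<in>\<O>. odd_cycle E ends C) \<and>
           (\<forall>C\<in>\<O>. \<forall>D\<in>\<O>. C \<noteq> D \<longrightarrow> C \<inter> D = {}) \<and>
           (\<forall>F. t_factor V E ends t F \<longrightarrow> (\<exists>C\<in>\<O>. F \<inter> C = {}))"
proof -
  txt \<open>This \<open>l\<close> makes \<open>r - l\<close> even, \<open>l < r - t\<close> and \<open>t mod 2 \<le> l\<close>.\<close>
  define l :: nat where "l = (if odd r then 1 else if odd t then 2 else 0)"
  have construction: "obstruction_graph r t ((r - l) div 2) l (t div 2) (t mod 2)"
  proof
    show "2 * ((r - l) div 2) + l = r" "l < r - t" "t div 2 \<le> (r - l) div 2" "t mod 2 \<le> l"
      using assms unfolding l_def by (auto elim!: oddE; presburger)+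
  qed (use assms in simp_all)
  from odd_cycle_obstruction_nat[OF obstruction_graph.odd_cycle_obstruction_triangles[OF construction]]
  show ?thesis
    unfolding odd_cycle_obstruction_def .
qed

end
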